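(* Let $m$ be a positive integer, $r\in[0,1)$, $\eta\in(0,1)$, and let $K$ be a distribution function supported on $[0,\infty)$ with finite $m$-th moment. Let $h$ be smoothly varying of order $m+r$ (of some index). Then for every $t>0$ such that $h$ is $m$ times differentiable on $[(1-\eta)t,\infty)$ with $h^{(m)}$ nonvanishing there, $$|(\mathsf T_{K,\eta}-\mathsf L_{K,m})h|(t)\le\sum_{j=0}^m\frac{|h^{(j)}(t)|}{j!}\int_{\eta t}^\infty x^j\,dK(x)+\frac{|h^{(m)}(t)|}{t^r\,m!}\int_0^{\eta t}\overline\Delta^r_{t,x/t}(h^{(m)})\,x^{m+r}\,dK(x).$$
   Context: $\mathsf T_{K,\eta}h(t)=\int_{-\infty}^{\eta t}h(t-x)\,dK(x)$. $\mu_{K,j}=\int x^j\,dK(x)$ and $\mathsf L_{K,m}h=\sum_{j=0}^m\frac{(-1)^j}{j!}\mu_{K,j}h^{(j)}$. For $g(t)\ne0$, $x\ne0$: $\Delta^r_{t,x}g=\mathrm{sign}(x)\frac{g(t(1-x))-g(t)}{|x|^rg(t)}$, and $\overline\Delta^r_{\tau,\delta}(g)=\sup_{t\ge\tau}\sup_{0<|x|\le\delta}|\Delta^r_{t,x}g|$. A function $h$ is smoothly varying of index $-\beta$ and order $s=m+r$ ($m\ge1$ integer, $r\in[0,1)$) if it is ultimately $m$ times continuously differentiable, $|h^{(m)}|$ is regularly varying of index $-\beta-m$, and $\lim_{\delta\to0}\limsup_{t\to\infty}\sup_{0<|x|\le\delta}|\Delta^r_{t,x}h^{(m)}|=0$.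 *)

theory Defs
  imports "HOL-Analysis.Analysis"
begin

text \<open>Distribution function supported on [0,infinity): nondecreasing, right-continuous,
  zero on the negative half-line, tending to 1 at infinity. dK is the
  Lebesgue-Stieltjes measure interval_measure K.\<close>
definition distr_fun_nonneg :: "(real \<Rightarrow> real) \<Rightarrow> bool" where
  "distr_fun_nonneg K \<longleftrightarrow> mono K \<and> (\<forall>x. continuous (at_right x) K)
     \<and> (\<forall>x<0. K x = 0) \<and> (K \<longlongrightarrow> 1) at_top"

abbreviation hderiv :: "nat \<Rightarrow> (real \<Rightarrow> real) \<Rightarrow> real \<Rightarrow> real" where
  "hderiv j h \<equiv> (deriv ^^ j) h"

definition T_op :: "(real \<Rightarrow> real) \<Rightarrow> real \<Rightarrow> (real \<Rightarrow> real) \<Rightarrow> real \<Rightarrow> real" where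
  "T_op K \<eta> h t = (LINT x:{..\<eta> * t}|interval_measure K. h (t - x))"

definition moment :: "(real \<Rightarrow> real) \<Rightarrow> nat \<Rightarrow> real" where
  "moment K j = (LINT x|interval_measure K. x ^ j)"

definition L_op :: "(real \<Rightarrow> real) \<Rightarrow> nat \<Rightarrow> (real \<Rightarrow> real) \<Rightarrow> real \<Rightarrow> real" where
  "L_op K m h t = (\<Sum>j\<le>m. (-1) ^ j / fact j * moment K j * hderiv j h t)"

definition Delta :: "real \<Rightarrow> real \<Rightarrow> real \<Rightarrow> (real \<Rightarrow> real) \<Rightarrow> real" where
  "Delta r t x g = sgn x * (g (t * (1 - x)) - g t) / (\<bar>x\<bar> powr r * g t)"

definition Deltabar :: "real \<Rightarrow> real \<Rightarrow> real \<Rightarrow> (real \<Rightarrow> real) \<Rightarrow> ennreal" where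
  "Deltabar r \<tau> \<delta> g = (SUP s\<in>{\<tau>..}. SUP x\<in>{x. 0 < \<bar>x\<bar> \<and> \<bar>x\<bar> \<le> \<delta>}.
       ennreal \<bar>Delta r s x g\<bar>)"

definition regularly_varying :: "real \<Rightarrow> (real \<Rightarrow> real) \<Rightarrow> bool" where
  "regularly_varying \<rho> f \<longleftrightarrow> (\<forall>\<^sub>F x in at_top. f x > 0) \<and>
     (\<forall>c>0. ((\<lambda>x. f (c * x) / f x) \<longlongrightarrow> c powr \<rho>) at_top)"

definition smoothly_varying :: "real \<Rightarrow> nat \<Rightarrow> real \<Rightarrow> (real \<Rightarrow> real) \<Rightarrow> bool" where
  "smoothly_varying \<beta> m r h \<longleftrightarrow>
     (\<exists>x0. (\<forall>j<m. \<forall>x\<ge>x0. (hderiv j h has_real_derivative hderiv (Suc j) h x) (at x))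
           \<and> continuous_on {x0..} (hderiv m h))
   \<and> regularly_varying (- \<beta> - real m) (\<lambda>x. \<bar>hderiv m h x\<bar>)
   \<and> ((\<lambda>\<delta>. Limsup at_top (\<lambda>t. SUP x\<in>{x. 0 < \<bar>x\<bar> \<and> \<bar>x\<bar> \<le> \<delta>}.
          ereal \<bar>Delta r t x (hderiv m h)\<bar>)) \<longlongrightarrow> 0) (at_right 0)"

end

theory Submission
  imports Defs
begin

(* T_{K,eta} h(t) - L_{K,m} h(t) is the integral over [0, eta t] of the Taylor remainder
   R(x) = h(t - x) - sum_j (-x)^j h^(j)(t) / j!, minus the parts of the moments mu_{K,j} that lie
   beyond eta t; these tails give the first sum. By Lagrange's form of the remainder,
   R(x) = (h^(m)(xi) - h^(m)(t)) (-x)^m / m! for some xi = t (1 - z) with 0 < z <= x / t, and by the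
   definition of Delta the increment of h^(m) is at most Deltabar(x / t) (x / t)^r |h^(m)(t)|, which
   gives the second term. *)

section \<open>Taylor remainders and the modulus Deltabar\<close>

lemma Delta_le_Deltabar:
  assumes "\<tau> \<le> s" "0 < \<bar>x\<bar>" "\<bar>x\<bar> \<le> \<delta>"
  shows "ennreal \<bar>Delta r s x g\<bar> \<le> Deltabar r \<tau> \<delta> g"
  unfolding Deltabar_def using assms
  by (intro SUP_upper2[of s] SUP_upper2[of x]) auto

lemma Deltabar_mono:
  assumes "\<delta> \<le> \<delta>'"
  shows "Deltabar r \<tau> \<delta> g \<le> Deltabar r \<tau> \<delta>' g"
  unfolding Deltabar_def using assms by (intro SUP_mono' SUP_subset_mono) auto

lemma borel_measurable_mono_real:
  fixes g :: "real \<Rightarrow> 'a::{linorder_topology, second_countable_topology}"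
  assumes "mono g"
  shows "g \<in> borel_measurable borel"
proof (rule borel_measurableI_less)
  fix c
  have "is_interval {x. g x < c}"
    unfolding is_interval_1 using assms by (auto dest: monoD intro: le_less_trans)
  then show "{x \<in> space borel. g x < c} \<in> sets borel"
    by (simp add: real_interval_borel_measurable)
qed

lemma borel_measurable_Deltabar_divide:
  assumes "0 < t"
  shows "(\<lambda>x. Deltabar r \<tau> (x / t) g) \<in> borel_measurable borel"
  using assms by (intro borel_measurable_mono_real monoI Deltabar_mono divide_right_mono) auto

lemma increment_le_Deltabar:
  fixes g :: "real \<Rightarrow> real"
  assumes "0 \<le> r" "0 < t" "t - y < \<xi>" "\<xi> < t" "g t \<noteq> 0"
  shows "ennreal \<bar>g \<xi> - g t\<bar> \<le> Deltabar r t (y / t) g * ennreal ((y / t) powr r * \<bar>g t\<bar>)"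
proof -
  define z where "z = (t - \<xi>) / t"
  have z: "0 < z" "z \<le> y / t"
    using assms by (auto simp: z_def divide_simps)
  have "\<bar>g \<xi> - g t\<bar> = \<bar>Delta r t z g\<bar> * (z powr r * \<bar>g t\<bar>)"
    using z assms by (simp add: Delta_def z_def abs_mult field_simps)
  also have "\<dots> \<le> \<bar>Delta r t z g\<bar> * ((y / t) powr r * \<bar>g t\<bar>)"
    using z assms by (intro mult_left_mono mult_right_mono powr_mono2) auto
  finally have "ennreal \<bar>g \<xi> - g t\<bar> \<le> ennreal \<bar>Delta r t z g\<bar> * ennreal ((y / t) powr r * \<bar>g t\<bar>)"
    by (simp add: ennreal_mult'[symmetric] ennreal_leI)
  also have "\<dots> \<le> Deltabar r t (y / t) g * ennreal ((y / t) powr r * \<bar>g t\<bar>)"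
    using z by (intro mult_right_mono Delta_le_Deltabar) auto
  finally show ?thesis .
qed

lemma taylor_down_remainder:
  fixes h :: "real \<Rightarrow> real"
  assumes "0 < m" "0 < y"
    and "\<And>j x. j < m \<Longrightarrow> t - y \<le> x \<Longrightarrow> x \<le> t \<Longrightarrow>
           (hderiv j h has_real_derivative hderiv (Suc j) h x) (at x)"
  obtains \<xi> where "t - y < \<xi>" "\<xi> < t"
    "h (t - y) - (\<Sum>j\<le>m. (-1) ^ j / fact j * hderiv j h t * y ^ j)
       = (hderiv m h \<xi> - hderiv m h t) / fact m * (- y) ^ m"
proof -
  obtain \<xi> where \<xi>: "t - y < \<xi>" "\<xi> < t"
    and "h (t - y) = (\<Sum>j<m. hderiv j h t / fact j * (- y) ^ j) + hderiv m h \<xi> / fact m * (- y) ^ m"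
    using Taylor_down[of m "\<lambda>j. hderiv j h" h "t - y" t t] assms by auto
  moreover have "(\<Sum>j\<le>m. (-1) ^ j / fact j * hderiv j h t * y ^ j)
      = (\<Sum>j<m. hderiv j h t / fact j * (- y) ^ j) + hderiv m h t / fact m * (- y) ^ m"
    by (simp add: lessThan_Suc_atMost[symmetric] power_minus[of y] mult_ac)
  ultimately show thesis
    by (intro that[OF \<xi>]) (simp add: field_simps)
qed

lemma taylor_remainder_le_Deltabar:
  fixes h :: "real \<Rightarrow> real"
  assumes "0 < m" "0 \<le> r" "0 < t" "0 < y"
    and "\<And>j x. j < m \<Longrightarrow> t - y \<le> x \<Longrightarrow> x \<le> t \<Longrightarrow>
           (hderiv j h has_real_derivative hderiv (Suc j) h x) (at x)"
    and "hderiv m h t \<noteq> 0"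
  shows "ennreal \<bar>h (t - y) - (\<Sum>j\<le>m. (-1) ^ j / fact j * hderiv j h t * y ^ j)\<bar>
    \<le> ennreal (\<bar>hderiv m h t\<bar> / (t powr r * fact m)) *
       (Deltabar r t (y / t) (hderiv m h) * ennreal (y powr (real m + r)))"
proof -
  let ?D = "hderiv m h"
  obtain \<xi> where \<xi>: "t - y < \<xi>" "\<xi> < t"
    and remainder: "h (t - y) - (\<Sum>j\<le>m. (-1) ^ j / fact j * hderiv j h t * y ^ j)
       = (?D \<xi> - ?D t) / fact m * (- y) ^ m"
    using taylor_down_remainder[of m y t h] assms by blast
  have "y powr (real m + r) = y ^ m * y powr r" "(y / t) powr r = y powr r / t powr r"
    using assms by (simp_all add: powr_add powr_realpow powr_divide)
  then have "(y / t) powr r * \<bar>?D t\<bar> * (y ^ m / fact m)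
      = \<bar>?D t\<bar> / (t powr r * fact m) * y powr (real m + r)"
    by simp
  then have scale: "ennreal ((y / t) powr r * \<bar>?D t\<bar>) * ennreal (y ^ m / fact m)
      = ennreal (\<bar>?D t\<bar> / (t powr r * fact m)) * ennreal (y powr (real m + r))"
    using assms by (simp add: ennreal_mult[symmetric])
  have "ennreal \<bar>h (t - y) - (\<Sum>j\<le>m. (-1) ^ j / fact j * hderiv j h t * y ^ j)\<bar>
      = ennreal \<bar>?D \<xi> - ?D t\<bar> * ennreal (y ^ m / fact m)"
    unfolding remainder using assms by (simp add: abs_mult power_abs ennreal_mult'[symmetric])
  also have "\<dots> \<le> Deltabar r t (y / t) ?D * ennreal ((y / t) powr r * \<bar>?D t\<bar>)
      * ennreal (y ^ m / fact m)"
    using assms \<xi> by (intro mult_right_mono increment_le_Deltabar) auto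
  also have "\<dots> = ennreal (\<bar>?D t\<bar> / (t powr r * fact m)) *
      (Deltabar r t (y / t) ?D * ennreal (y powr (real m + r)))"
    unfolding mult.assoc scale by (rule mult.left_commute)
  finally show ?thesis .
qed

section \<open>Distribution functions on the half-line\<close>

lemma distr_fun_nonneg_emeasure_Ioc:
  assumes "distr_fun_nonneg K" "u \<le> v"
  shows "emeasure (interval_measure K) {u<..v} = ennreal (K v - K u)"
  using assms unfolding distr_fun_nonneg_def
  by (intro emeasure_interval_measure_Ioc) (auto dest: monoD)

lemma distr_fun_nonneg_emeasure_Ioc_finite:
  assumes "distr_fun_nonneg K"
  shows "emeasure (interval_measure K) {u<..v} < \<infinity>"
  using distr_fun_nonneg_emeasure_Ioc[OF assms, of u v] by (cases "u \<le> v") auto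

lemma distr_fun_nonneg_AE_nonneg:
  assumes "distr_fun_nonneg K"
  shows "AE x in interval_measure K. 0 \<le> x"
proof (rule AE_I')
  let ?N = "\<lambda>n::nat. {- real (Suc n)<..- inverse (real (Suc n))}"
  have "emeasure (interval_measure K) (?N n) = 0" for n
    using assms by (subst distr_fun_nonneg_emeasure_Ioc)
      (auto simp: distr_fun_nonneg_def field_simps)
  then show "(\<Union>n. ?N n) \<in> null_sets (interval_measure K)"
    by (intro null_sets_UN) (auto simp: null_sets_def)
  show "{x \<in> space (interval_measure K). \<not> 0 \<le> x} \<subseteq> (\<Union>n. ?N n)"
  proof safe
    fix x :: real assume "\<not> 0 \<le> x"
    obtain n :: nat where n: "max (- x) (- inverse x) < real n"
      using reals_Archimedean2 by blast
    then have "- real (Suc n) < x" by auto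
    moreover have "x \<le> - inverse (real (Suc n))"
      using n \<open>\<not> 0 \<le> x\<close> by (auto simp: field_simps)
    ultimately show "x \<in> (\<Union>n. ?N n)" by auto
  qed
qed

lemma integrable_power_le:
  fixes M :: "real measure"
  assumes "sets M = sets borel" "emeasure M {-1<..1} < \<infinity>"
    and "integrable M (\<lambda>x. x ^ m)" "j \<le> m"
  shows "integrable M (\<lambda>x. x ^ j)"
proof (rule Bochner_Integration.integrable_bound)
  show "integrable M (\<lambda>x. \<bar>x ^ m\<bar> + indicator {-1<..1} x :: real)"
    using assms by (intro Bochner_Integration.integrable_add Bochner_Integration.integrable_abs)
      (auto simp: integrable_indicator_iff)
  show "(\<lambda>x. x ^ j) \<in> borel_measurable M"
    by (simp add: measurable_cong_sets[OF assms(1) refl])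
  have "\<bar>x\<bar> ^ j \<le> \<bar>x\<bar> ^ m + indicator {-1<..1} x" for x :: real
  proof (cases "1 \<le> \<bar>x\<bar>")
    case True
    then show ?thesis
      using power_increasing[OF \<open>j \<le> m\<close> True] by (simp add: indicator_def)
  next
    case False
    then have "\<bar>x\<bar> ^ j \<le> 1" "x \<in> {-1<..1}"
      by (auto intro: power_le_one)
    moreover have "0 \<le> \<bar>x\<bar> ^ m" by simp
    ultimately show ?thesis by (simp add: add_increasing)
  qed
  then show "AE x in M. norm (x ^ j) \<le> norm (\<bar>x ^ m\<bar> + indicator {-1<..1} x :: real)"
    by (simp add: power_abs)
qed

lemma continuous_on_Iic_reflect:
  fixes h :: "real \<Rightarrow> real"
  assumes "\<And>x. t - a \<le> x \<Longrightarrow> isCont h x"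
  shows "continuous_on {..a} (\<lambda>x. h (t - x))"
proof (intro continuous_at_imp_continuous_on ballI)
  fix x assume "x \<in> {..a}"
  then have "isCont h (t - x)"
    using assms by auto
  then show "isCont (\<lambda>x. h (t - x)) x"
    by (rule isCont_o2[where f = "\<lambda>x. t - x", rotated]) (intro continuous_intros)
qed

lemma set_integrable_continuous_on_Iic:
  fixes M :: "real measure" and f :: "real \<Rightarrow> real"
  assumes "sets M = sets borel" "AE x in M. 0 \<le> x" "emeasure M {-1<..a} < \<infinity>"
    and "continuous_on {..a} f"
  shows "set_integrable M {..a} f"
proof -
  have "compact (f ` {0..a})"
    by (intro compact_continuous_image continuous_on_subset[OF assms(4)]) auto
  then obtain B where "0 < B" and B: "\<And>x. x \<in> {0..a} \<Longrightarrow> \<bar>f x\<bar> \<le> B"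
    using compact_imp_bounded bounded_pos by (metis image_eqI real_norm_def)
  show ?thesis
    unfolding set_integrable_def
  proof (rule Bochner_Integration.integrable_bound)
    show "integrable M (\<lambda>x. B * indicator {-1<..a} x :: real)"
      using assms(1,3)
      by (intro Bochner_Integration.integrable_mult_right) (simp add: integrable_indicator_iff)
    have "(\<lambda>x. indicator {..a} x *\<^sub>R f x) \<in> borel_measurable borel"
      by (rule borel_measurable_continuous_on_indicator[OF _ assms(4)]) simp
    then show "(\<lambda>x. indicator {..a} x *\<^sub>R f x) \<in> borel_measurable M"
      by (simp add: measurable_cong_sets[OF assms(1) refl])
    show "AE x in M. norm (indicator {..a} x *\<^sub>R f x) \<le> norm (B * indicator {-1<..a} x :: real)"
      using assms(2) by (rule AE_mp) (use B \<open>0 < B\<close> in \<open>auto simp: indicator_def\<close>)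
  qed
qed

section \<open>Truncated moment expansions\<close>

lemma set_integral_sum:
  fixes f :: "'i \<Rightarrow> 'a \<Rightarrow> 'b::{banach, second_countable_topology}"
  assumes "\<And>i. i \<in> I \<Longrightarrow> set_integrable M A (f i)"
  shows "set_integrable M A (\<lambda>x. \<Sum>i\<in>I. f i x)"
    and "(LINT x:A|M. (\<Sum>i\<in>I. f i x)) = (\<Sum>i\<in>I. LINT x:A|M. f i x)"
  using assms unfolding set_integrable_def set_lebesgue_integral_def
  by (simp_all add: scaleR_sum_right)

lemma ennreal_abs_set_integral_le:
  fixes f :: "'a \<Rightarrow> real"
  assumes "set_integrable M A f"
  shows "ennreal \<bar>LINT x:A|M. f x\<bar> \<le> (\<integral>\<^sup>+ x\<in>A. ennreal \<bar>f x\<bar> \<partial>M)"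
proof -
  have "ennreal \<bar>LINT x:A|M. f x\<bar> \<le> (\<integral>\<^sup>+ x. ennreal (norm (indicator A x *\<^sub>R f x)) \<partial>M)"
    using integral_norm_bound_ennreal[OF assms[unfolded set_integrable_def]]
    by (simp add: set_lebesgue_integral_def)
  also have "\<dots> = (\<integral>\<^sup>+ x\<in>A. ennreal \<bar>f x\<bar> \<partial>M)"
    by (intro nn_integral_cong) (simp add: indicator_def)
  finally show ?thesis .
qed

lemma nn_set_integral_cmult:
  assumes "f \<in> borel_measurable M" "A \<in> sets M"
  shows "(\<integral>\<^sup>+ x\<in>A. c * f x \<partial>M) = c * (\<integral>\<^sup>+ x\<in>A. f x \<partial>M)"
proof -
  have "(\<lambda>x. f x * indicator A x) \<in> borel_measurable M"
    using assms by (intro borel_measurable_times_ennreal borel_measurable_indicator)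
  then show ?thesis
    by (simp add: mult.assoc nn_integral_cmult)
qed

lemma set_integral_power_Ioi_nonneg:
  fixes M :: "real measure"
  assumes "0 \<le> a"
  shows "0 \<le> (LINT x:{a<..}|M. x ^ j)"
  unfolding set_lebesgue_integral_def using assms
  by (intro Bochner_Integration.integral_nonneg) (auto simp: indicator_def)

lemma nn_set_integral_power_Ioi:
  fixes M :: "real measure"
  assumes "sets M = sets borel" "integrable M (\<lambda>x. x ^ j)" "0 \<le> a"
  shows "(\<integral>\<^sup>+ x\<in>{a<..}. ennreal (x ^ j) \<partial>M) = ennreal (LINT x:{a<..}|M. x ^ j)"
  using assms by (intro nn_set_integral_eq_set_integral) auto

text \<open>The point \<open>0\<close> may carry mass but is left out of the bounding integral,
  hence the hypothesis \<open>R 0 = 0\<close>.\<close>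

lemma ennreal_abs_set_integral_Iic_le:
  fixes M :: "real measure" and R :: "real \<Rightarrow> real"
  assumes "set_integrable M {..a} R" "AE x in M. 0 \<le> x" "R 0 = 0"
    and "\<And>x. 0 < x \<Longrightarrow> x \<le> a \<Longrightarrow> ennreal \<bar>R x\<bar> \<le> g x"
  shows "ennreal \<bar>LINT x:{..a}|M. R x\<bar> \<le> (\<integral>\<^sup>+ x\<in>{0<..a}. g x \<partial>M)"
proof -
  have "AE x in M. ennreal \<bar>R x\<bar> * indicator {..a} x \<le> g x * indicator {0<..a} x"
    using assms(2)
  proof eventually_elim
    case (elim x)
    then show ?case
      using assms(3) assms(4)[of x] by (cases "x = 0") (auto simp: indicator_def)
  qed
  then show ?thesis
    using ennreal_abs_set_integral_le[OF assms(1)] by (blast intro: order_trans nn_integral_mono_AE)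
qed

lemma set_integral_Iic_minus_moments:
  fixes M :: "real measure" and f :: "real \<Rightarrow> real" and c :: "nat \<Rightarrow> real"
  assumes sets_M: "sets M = sets borel"
    and powers: "\<And>j. j \<le> m \<Longrightarrow> integrable M (\<lambda>x. x ^ j)"
    and f: "set_integrable M {..a} f"
  shows "set_integrable M {..a} (\<lambda>x. f x - (\<Sum>j\<le>m. c j * x ^ j))"
    and "(LINT x:{..a}|M. f x) - (\<Sum>j\<le>m. c j * (LINT x|M. x ^ j))
      = (LINT x:{..a}|M. f x - (\<Sum>j\<le>m. c j * x ^ j)) - (\<Sum>j\<le>m. c j * (LINT x:{a<..}|M. x ^ j))"
proof -
  have powers_on: "set_integrable M A (\<lambda>x. x ^ j)" if "j \<le> m" "A \<in> sets borel" for A j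
    unfolding set_integrable_def using that sets_M powers[OF that(1)]
    by (intro integrable_mult_indicator) auto
  have moment_split: "(LINT x|M. x ^ j) = (LINT x:{..a}|M. x ^ j) + (LINT x:{a<..}|M. x ^ j)"
    if "j \<le> m" for j
  proof -
    have "{..a} \<union> {a<..} = space M"
      using sets_eq_imp_space_eq[OF sets_M] by auto
    then have "(LINT x|M. x ^ j) = (LINT x:{..a} \<union> {a<..}|M. x ^ j)"
      using set_integral_space[OF powers[OF that]] by simp
    also have "\<dots> = (LINT x:{..a}|M. x ^ j) + (LINT x:{a<..}|M. x ^ j)"
      using that by (intro set_integral_Un powers_on) auto
    finally show ?thesis .
  qed
  have poly: "set_integrable M {..a} (\<lambda>x. \<Sum>j\<le>m. c j * x ^ j)"
    "(LINT x:{..a}|M. (\<Sum>j\<le>m. c j * x ^ j)) = (\<Sum>j\<le>m. c j * (LINT x:{..a}|M. x ^ j))"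
    using set_integral_sum[of "{..m}" M "{..a}" "\<lambda>j x. c j * x ^ j"] powers_on by simp_all
  show "set_integrable M {..a} (\<lambda>x. f x - (\<Sum>j\<le>m. c j * x ^ j))"
    using f poly(1) by (rule set_integral_diff(1))
  show "(LINT x:{..a}|M. f x) - (\<Sum>j\<le>m. c j * (LINT x|M. x ^ j))
      = (LINT x:{..a}|M. f x - (\<Sum>j\<le>m. c j * x ^ j)) - (\<Sum>j\<le>m. c j * (LINT x:{a<..}|M. x ^ j))"
    unfolding set_integral_diff(2)[OF f poly(1)] poly(2)
    by (simp add: moment_split distrib_left sum.distrib)
qed

lemma moment_expansion_error_le:
  fixes M :: "real measure" and f :: "real \<Rightarrow> real" and c :: "nat \<Rightarrow> real"
    and g :: "real \<Rightarrow> ennreal"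
  assumes sets_M: "sets M = sets borel" and nonneg: "AE x in M. 0 \<le> x" and "0 \<le> a"
    and powers: "\<And>j. j \<le> m \<Longrightarrow> integrable M (\<lambda>x. x ^ j)"
    and f: "set_integrable M {..a} f"
    and remainder: "\<And>x. 0 < x \<Longrightarrow> x \<le> a \<Longrightarrow> ennreal \<bar>f x - (\<Sum>j\<le>m. c j * x ^ j)\<bar> \<le> g x"
    and "f 0 = c 0"
  shows "ennreal \<bar>(LINT x:{..a}|M. f x) - (\<Sum>j\<le>m. c j * (LINT x|M. x ^ j))\<bar>
    \<le> (\<Sum>j\<le>m. ennreal \<bar>c j\<bar> * (\<integral>\<^sup>+ x\<in>{a<..}. ennreal (x ^ j) \<partial>M))
       + (\<integral>\<^sup>+ x\<in>{0<..a}. g x \<partial>M)"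
    (is "_ \<le> ?tails + _")
proof -
  define R where "R x = f x - (\<Sum>j\<le>m. c j * x ^ j)" for x
  define tail where "tail j = (LINT x:{a<..}|M. x ^ j)" for j
  have tail_nonneg: "0 \<le> tail j" for j
    unfolding tail_def using \<open>0 \<le> a\<close> by (rule set_integral_power_Ioi_nonneg)
  have "R 0 = 0"
    unfolding R_def \<open>f 0 = c 0\<close> by (induction m) auto
  then have head: "ennreal \<bar>LINT x:{..a}|M. R x\<bar> \<le> (\<integral>\<^sup>+ x\<in>{0<..a}. g x \<partial>M)"
    using set_integral_Iic_minus_moments(1)[where c = c and m = m, OF sets_M powers f]
      nonneg remainder
    unfolding R_def by (intro ennreal_abs_set_integral_Iic_le)
  have "\<bar>\<Sum>j\<le>m. c j * tail j\<bar> \<le> (\<Sum>j\<le>m. \<bar>c j\<bar> * tail j)"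
    using sum_abs[of "\<lambda>j. c j * tail j" "{..m}"] tail_nonneg by (simp add: abs_mult)
  then have "\<bar>(LINT x:{..a}|M. f x) - (\<Sum>j\<le>m. c j * (LINT x|M. x ^ j))\<bar>
      \<le> \<bar>LINT x:{..a}|M. R x\<bar> + (\<Sum>j\<le>m. \<bar>c j\<bar> * tail j)"
    using set_integral_Iic_minus_moments(2)[where c = c and m = m, OF sets_M powers f]
      abs_triangle_ineq4[of "LINT x:{..a}|M. R x" "\<Sum>j\<le>m. c j * tail j"]
    unfolding R_def tail_def by linarith
  then have "ennreal \<bar>(LINT x:{..a}|M. f x) - (\<Sum>j\<le>m. c j * (LINT x|M. x ^ j))\<bar>
      \<le> ennreal \<bar>LINT x:{..a}|M. R x\<bar> + ennreal (\<Sum>j\<le>m. \<bar>c j\<bar> * tail j)"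
    using tail_nonneg
    by (simp add: ennreal_leI ennreal_plus[symmetric] sum_nonneg del: ennreal_plus)
  also have "ennreal (\<Sum>j\<le>m. \<bar>c j\<bar> * tail j) = (\<Sum>j\<le>m. ennreal \<bar>c j\<bar> * ennreal (tail j))"
    using tail_nonneg by (simp add: ennreal_mult'[symmetric])
  also have "\<dots> = ?tails"
    unfolding tail_def using nn_set_integral_power_Ioi[OF sets_M powers \<open>0 \<le> a\<close>] by simp
  also have "ennreal \<bar>LINT x:{..a}|M. R x\<bar> + ?tails \<le> (\<integral>\<^sup>+ x\<in>{0<..a}. g x \<partial>M) + ?tails"
    using head by (rule add_right_mono)
  finally show ?thesis
    by (simp only: add.commute)
qed

lemma T_op_minus_L_op:
  "T_op K \<eta> h t - L_op K m h t
    = (LINT x:{..\<eta> * t}|interval_measure K. h (t - x))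
      - (\<Sum>j\<le>m. (-1) ^ j / fact j * hderiv j h t * (LINT x|interval_measure K. x ^ j))"
  unfolding T_op_def L_op_def moment_def by (simp add: ac_simps)

theorem theorem5p4p1:
  fixes m :: nat and r \<eta> \<beta> t :: real and K h :: "real \<Rightarrow> real"
  assumes "m \<ge> 1" and "0 \<le> r" and "r < 1" and "0 < \<eta>" and "\<eta> < 1"
    and "distr_fun_nonneg K"
    and "integrable (interval_measure K) (\<lambda>x. x ^ m)"
    and "smoothly_varying \<beta> m r h"
    and "0 < t"
    and "\<forall>j<m. \<forall>x\<ge>(1 - \<eta>) * t.
           (hderiv j h has_real_derivative hderiv (Suc j) h x) (at x)"
    and "\<forall>x\<ge>(1 - \<eta>) * t. hderiv m h x \<noteq> 0"
  shows "ennreal \<bar>T_op K \<eta> h t - L_op K m h t\<bar>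
    \<le> (\<Sum>j\<le>m. ennreal (\<bar>hderiv j h t\<bar> / fact j) *
          (\<integral>\<^sup>+ x\<in>{\<eta> * t<..}. ennreal (x ^ j) \<partial>interval_measure K))
      + ennreal (\<bar>hderiv m h t\<bar> / (t powr r * fact m)) *
          (\<integral>\<^sup>+ x\<in>{0<..\<eta> * t}. Deltabar r t (x / t) (hderiv m h) * ennreal (x powr (real m + r))
             \<partial>interval_measure K)"
proof -
  let ?M = "interval_measure K"
  let ?C = "ennreal (\<bar>hderiv m h t\<bar> / (t powr r * fact m))"
  let ?G = "\<lambda>x. Deltabar r t (x / t) (hderiv m h) * ennreal (x powr (real m + r))"
  have "(1 - \<eta>) * t = t - \<eta> * t"
    by (simp add: algebra_simps)
  note derivs = assms(10)[unfolded this, rule_format]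
    and nonzero = assms(11)[unfolded this, rule_format]
  note nonneg = distr_fun_nonneg_AE_nonneg[OF assms(6)]
    and Ioc_finite = distr_fun_nonneg_emeasure_Ioc_finite[OF assms(6)]
  have powers: "integrable ?M (\<lambda>x. x ^ j)" if "j \<le> m" for j
    by (rule integrable_power_le[OF sets_interval_measure Ioc_finite assms(7) that])
  have f: "set_integrable ?M {..\<eta> * t} (\<lambda>x. h (t - x))"
    using derivs[of 0] assms(1)
    by (intro set_integrable_continuous_on_Iic[OF sets_interval_measure nonneg Ioc_finite]
        continuous_on_Iic_reflect DERIV_isCont) auto
  have remainder:
    "ennreal \<bar>h (t - x) - (\<Sum>j\<le>m. (-1) ^ j / fact j * hderiv j h t * x ^ j)\<bar> \<le> ?C * ?G x"
    if "0 < x" "x \<le> \<eta> * t" for x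
    using assms(1,2,9) that derivs nonzero[of t] by (intro taylor_remainder_le_Deltabar) auto
  have [measurable]: "(\<lambda>x. Deltabar r t (x / t) (hderiv m h)) \<in> borel_measurable borel"
    by (rule borel_measurable_Deltabar_divide[OF assms(9)])
  have "ennreal \<bar>T_op K \<eta> h t - L_op K m h t\<bar>
      \<le> (\<Sum>j\<le>m. ennreal \<bar>(-1) ^ j / fact j * hderiv j h t\<bar> *
            (\<integral>\<^sup>+ x\<in>{\<eta> * t<..}. ennreal (x ^ j) \<partial>?M))
         + (\<integral>\<^sup>+ x\<in>{0<..\<eta> * t}. ?C * ?G x \<partial>?M)"
    unfolding T_op_minus_L_op using assms(4,9)
    by (intro moment_expansion_error_le[OF sets_interval_measure nonneg _ powers f remainder])
      simp_all
  also have "(\<integral>\<^sup>+ x\<in>{0<..\<eta> * t}. ?C * ?G x \<partial>?M) = ?C * (\<integral>\<^sup>+ x\<in>{0<..\<eta> * t}. ?G x \<partial>?M)"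
    by (rule nn_set_integral_cmult) simp_all
  finally show ?thesis
    by (simp add: abs_mult power_abs)
qed

end
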